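(* Let $f$ be a nontrivial permutation of $\mathbb{F}_q$ whose disjoint cycle decomposition has $t\ge1$ cycles of lengths $s_1,\dots,s_t\ge2$, and let $s:=\sum_{i=1}^t s_i$ and $k:=s+t$. Then $f$ (as a function $\mathbb{F}_q\to\mathbb{F}_q$) can be written as a composition $$f=\mu(x)\circ x^{q-2}\circ(x-a_k)\circ x^{q-2}\circ(x-a_{k-1})\circ\cdots\circ x^{q-2}\circ(x-a_1)$$ with $a_1,\dots,a_k\in\mathbb{F}_q$ and $\mu\in\mathbb{F}_q[x]$ a polynomial of degree one; i.e. $f$ is a composition of $k$ copies of $x^{q-2}$ and $k+1$ degree-one polynomials over $\mathbb{F}_q$. In particular every permutation of $\mathbb{F}_q$ is a composition of $x^{q-2}$ and degree-one polynomials over $\mathbb{F}_q$.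
   Context: Let $q>2$ be a prime power and $\mathbb{F}_q$ the field with $q$ elements. On $\mathbb{F}_q$, $x^{q-2}$ is the map $c\mapsto c^{q-2}$ (so $0\mapsto0$ and $c\mapsto c^{-1}$ for $c\neq0$). Composition is $(f\circ g)(x)=f(g(x))$. *)

theory Defs
  imports "HOL-Combinatorics.Orbits" "HOL-Computational_Algebra.Polynomial"
begin

definition nontriv_cycles :: "('a \<Rightarrow> 'a) \<Rightarrow> 'a set set" where
  "nontriv_cycles f = {orbit f x | x. f x \<noteq> x}"

fun inv_chain :: "nat \<Rightarrow> (nat \<Rightarrow> 'a::field) \<Rightarrow> nat \<Rightarrow> ('a \<Rightarrow> 'a)" where
  "inv_chain e a 0 = id"
| "inv_chain e a (Suc i) = (\<lambda>x. x ^ e) \<circ> (\<lambda>x. x - a (Suc i)) \<circ> inv_chain e a i"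

end

(* On F_q the map x^(q-2) is inversion, extended by 0 -> 0. Composing inversions with
   translations, a chain of length n realises z -> alpha + beta / (tau z - c), where tau is
   a cycle of length n and the point sent to infinity lands on alpha because beta / 0 = 0;
   one more step turns this into an affine image of tau, so an n-cycle costs n + 1
   inversions. An affine map in front of a chain can be pushed through it, changing only
   the translations, so chains compose, and peeling the disjoint cycles off f one at a time
   gives the count s + t. *)

theory Submission
  imports Defs "HOL-Combinatorics.Cycles"
begin

lemma power_card_minus_two_eq_inverse:
  fixes x :: "'a::{finite,field}"
  assumes "card (UNIV::'a set) > 2"
  shows "x ^ (card (UNIV::'a set) - 2) = inverse x"
proof (cases "x = 0")
  case True
  then show ?thesis using assms by (simp add: power_0_left)
next
  case False
  let ?q = "card (UNIV::'a set)"
  have "(\<Prod>y\<in>UNIV-{0}. x * y) = x ^ (?q - 1) * \<Prod>(UNIV-{0::'a})"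
    by (simp add: prod.distrib card_Diff_singleton)
  moreover have "(\<Prod>y\<in>UNIV-{0}. x * y) = \<Prod>(UNIV-{0::'a})"
    by (rule prod.reindex_bij_witness[of _ "\<lambda>y. y / x" "\<lambda>y. x * y"]) (use False in auto)
  ultimately have "x ^ (?q - 1) = 1" by simp
  moreover have "?q - 1 = Suc (?q - 2)" using assms by simp
  ultimately have "x * x ^ (?q - 2) = 1" by simp
  then show ?thesis by (metis inverse_unique mult.commute)
qed

lemma inv_chain_cong:
  assumes "\<And>i. 0 < i \<Longrightarrow> i \<le> k \<Longrightarrow> a i = b i"
  shows "inv_chain e a k = inv_chain e b k"
  using assms by (induction k) auto

lemma inv_chain_Suc_fun_upd:
  fixes a :: "nat \<Rightarrow> 'a::field"
  assumes "\<And>x::'a. x ^ e = inverse x"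
  shows "inv_chain e (a(Suc k := c)) (Suc k) x = inverse (inv_chain e a k x - c)"
proof -
  have "inv_chain e (a(Suc k := c)) k = inv_chain e a k" by (rule inv_chain_cong) simp
  then show ?thesis by (simp add: assms)
qed

lemma inv_chain_add:
  "inv_chain e (\<lambda>i. if i \<le> n then a i else b (i - n)) (m + n) = inv_chain e b m \<circ> inv_chain e a n"
proof (induction m)
  case 0
  show ?case by simp (rule inv_chain_cong, simp)
next
  case (Suc m)
  then show ?case by (simp add: fun_eq_iff Suc_diff_le)
qed

lemma inv_chain_comp_affine:
  fixes a :: "nat \<Rightarrow> 'a::field"
  assumes inv: "\<And>x::'a. x ^ e = inverse x" and "\<alpha> \<noteq> 0"
  shows "\<exists>a' \<alpha>' \<beta>'. \<alpha>' \<noteq> 0 \<and>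
           inv_chain e a k \<circ> (\<lambda>x. \<alpha> * x + \<beta>) = (\<lambda>x. \<alpha>' * inv_chain e a' k x + \<beta>')"
proof (induction k)
  case 0
  then show ?case using assms(2) by auto
next
  case (Suc k)
  then obtain a' \<alpha>' \<beta>' where "\<alpha>' \<noteq> 0"
    and IH: "inv_chain e a k \<circ> (\<lambda>x. \<alpha> * x + \<beta>) = (\<lambda>x. \<alpha>' * inv_chain e a' k x + \<beta>')"
    by blast
  define c where "c = (a (Suc k) - \<beta>') / \<alpha>'"
  have "inv_chain e a (Suc k) \<circ> (\<lambda>x. \<alpha> * x + \<beta>)
        = (\<lambda>x. inverse \<alpha>' * inv_chain e (a'(Suc k := c)) (Suc k) x + 0)"
  proof
    fix x
    have "(inv_chain e a (Suc k) \<circ> (\<lambda>x. \<alpha> * x + \<beta>)) x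
          = inverse (\<alpha>' * inv_chain e a' k x + \<beta>' - a (Suc k))"
      using fun_cong[OF IH, of x] by (simp add: inv)
    also have "\<alpha>' * inv_chain e a' k x + \<beta>' - a (Suc k) = \<alpha>' * (inv_chain e a' k x - c)"
      using \<open>\<alpha>' \<noteq> 0\<close> by (simp add: c_def field_simps)
    finally show "(inv_chain e a (Suc k) \<circ> (\<lambda>x. \<alpha> * x + \<beta>)) x
                  = inverse \<alpha>' * inv_chain e (a'(Suc k := c)) (Suc k) x + 0"
      unfolding inv_chain_Suc_fun_upd[OF inv] by (simp add: inverse_mult_distrib)
  qed
  then show ?case using \<open>\<alpha>' \<noteq> 0\<close> by (metis inverse_nonzero_iff_nonzero)
qed

definition affine_inv_chain :: "nat \<Rightarrow> nat \<Rightarrow> ('a::field \<Rightarrow> 'a) \<Rightarrow> bool" where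
  "affine_inv_chain e k f \<longleftrightarrow> (\<exists>a \<alpha> \<beta>. \<alpha> \<noteq> 0 \<and> f = (\<lambda>x. \<alpha> * inv_chain e a k x + \<beta>))"

lemma affine_inv_chain_id: "affine_inv_chain e 0 id"
  unfolding affine_inv_chain_def by (intro exI[of _ undefined] exI[of _ 1] exI[of _ 0]) auto

lemma affine_inv_chain_comp:
  fixes g h :: "'a::field \<Rightarrow> 'a"
  assumes inv: "\<And>x::'a. x ^ e = inverse x"
    and "affine_inv_chain e m g" "affine_inv_chain e n h"
  shows "affine_inv_chain e (m + n) (g \<circ> h)"
proof -
  obtain a \<alpha> \<beta> where "\<alpha> \<noteq> 0" and g: "g = (\<lambda>x. \<alpha> * inv_chain e a m x + \<beta>)"
    using assms(2) unfolding affine_inv_chain_def by blast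
  obtain b \<gamma> \<delta> where "\<gamma> \<noteq> 0" and h: "h = (\<lambda>x. \<gamma> * inv_chain e b n x + \<delta>)"
    using assms(3) unfolding affine_inv_chain_def by blast
  obtain a' \<alpha>' \<beta>' where "\<alpha>' \<noteq> 0"
    and a': "inv_chain e a m \<circ> (\<lambda>x. \<gamma> * x + \<delta>) = (\<lambda>x. \<alpha>' * inv_chain e a' m x + \<beta>')"
    using inv_chain_comp_affine[OF inv \<open>\<gamma> \<noteq> 0\<close>] by blast
  let ?c = "\<lambda>i. if i \<le> n then b i else a' (i - n)"
  have "g \<circ> h = (\<lambda>x. (\<alpha> * \<alpha>') * inv_chain e ?c (m + n) x + (\<alpha> * \<beta>' + \<beta>))"
  proof
    fix x
    have "(g \<circ> h) x = \<alpha> * (\<alpha>' * inv_chain e a' m (inv_chain e b n x) + \<beta>') + \<beta>"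
      using fun_cong[OF a', of "inv_chain e b n x"] by (simp add: g h)
    then show "(g \<circ> h) x = (\<alpha> * \<alpha>') * inv_chain e ?c (m + n) x + (\<alpha> * \<beta>' + \<beta>)"
      by (simp add: inv_chain_add algebra_simps)
  qed
  then show ?thesis
    using \<open>\<alpha> \<noteq> 0\<close> \<open>\<alpha>' \<noteq> 0\<close> unfolding affine_inv_chain_def by (metis mult_eq_0_iff)
qed

lemma inverse_hyperbola_diff_transpose:
  fixes x y w \<beta> :: "'a::field"
  assumes "x \<noteq> y" "\<beta> \<noteq> 0"
  defines "D \<equiv> (x - y) / \<beta>"
  shows "inverse (\<beta> / (w - x) - \<beta> / (y - x)) = D + D * (y - x) / (transpose y x w - y)"
proof -
  consider "w = x" | "w = y" | "w \<noteq> x" "w \<noteq> y" by blast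
  then show ?thesis
  proof cases
    case 1
    then show ?thesis by (simp add: D_def) (metis minus_diff_eq minus_divide_left)
  next
    case 2
    then show ?thesis using assms(1) by (simp add: D_def add_divide_distrib[symmetric])
  next
    case 3
    then have "w - x \<noteq> 0" "w - y \<noteq> 0" "y - x \<noteq> 0" using assms(1) by auto
    then show ?thesis using 3 assms(2) by (simp add: D_def field_simps)
  qed
qed

lemma inv_chain_eq_hyperbola_cycle_of_list:
  fixes cs :: "'a::field list"
  assumes inv: "\<And>x::'a. x ^ e = inverse x" and "distinct cs" "cs \<noteq> []"
  shows "\<exists>a \<alpha> \<beta>. \<beta> \<noteq> 0 \<and>
           inv_chain e a (length cs) = (\<lambda>x. \<alpha> + \<beta> / (cycle_of_list cs x - hd cs))"
  using assms(2,3)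
proof (induction cs rule: cycle_of_list.induct)
  case (1 y x cs)
  have "distinct (x # cs)" "x \<noteq> y" using "1.prems" by (simp_all, blast)
  obtain a \<alpha> \<beta> where "\<beta> \<noteq> 0"
    and IH: "inv_chain e a (length (x # cs)) = (\<lambda>z. \<alpha> + \<beta> / (cycle_of_list (x # cs) z - hd (x # cs)))"
    using "1.IH"[OF \<open>distinct (x # cs)\<close> list.distinct(2)] by blast
  define D where "D = (x - y) / \<beta>"
  let ?a = "a(Suc (length (x # cs)) := \<alpha> + \<beta> / (y - x))"
  have len: "length (y # x # cs) = Suc (length (x # cs))" by simp
  have "inv_chain e ?a (length (y # x # cs))
        = (\<lambda>z. D + D * (y - x) / (cycle_of_list (y # x # cs) z - hd (y # x # cs)))"
  proof
    fix z
    have "inv_chain e ?a (length (y # x # cs)) z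
          = inverse (\<beta> / (cycle_of_list (x # cs) z - x) - \<beta> / (y - x))"
      unfolding len inv_chain_Suc_fun_upd[OF inv] IH by simp
    also have "\<dots> = D + D * (y - x) / (cycle_of_list (y # x # cs) z - hd (y # x # cs))"
      unfolding D_def using inverse_hyperbola_diff_transpose[OF \<open>x \<noteq> y\<close> \<open>\<beta> \<noteq> 0\<close>] by simp
    finally show "inv_chain e ?a (length (y # x # cs)) z
                  = D + D * (y - x) / (cycle_of_list (y # x # cs) z - hd (y # x # cs))" .
  qed
  moreover have "D * (y - x) \<noteq> 0" using \<open>x \<noteq> y\<close> \<open>\<beta> \<noteq> 0\<close> by (simp add: D_def)
  ultimately show ?case by (intro exI[of _ ?a] exI[of _ D] exI[of _ "D * (y - x)"]) blast
next
  case ("2_2" v)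
  have "inv_chain e (\<lambda>_. v) (length [v]) = (\<lambda>x. 0 + 1 / (cycle_of_list [v] x - hd [v]))"
  proof
    fix x
    show "inv_chain e (\<lambda>_. v) (length [v]) x = 0 + 1 / (cycle_of_list [v] x - hd [v])"
      using inv[of "x - v"] by (simp add: inverse_eq_divide)
  qed
  then show ?case using one_neq_zero by blast
qed simp

lemma affine_inv_chain_cycle_of_list:
  fixes cs :: "'a::field list"
  assumes inv: "\<And>x::'a. x ^ e = inverse x" and "distinct cs" "cs \<noteq> []"
  shows "affine_inv_chain e (Suc (length cs)) (cycle_of_list cs)"
proof -
  obtain a \<alpha> \<beta> where "\<beta> \<noteq> 0"
    and chain: "inv_chain e a (length cs) = (\<lambda>x. \<alpha> + \<beta> / (cycle_of_list cs x - hd cs))"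
    using inv_chain_eq_hyperbola_cycle_of_list[OF assms] by blast
  have "cycle_of_list cs = (\<lambda>x. \<beta> * inv_chain e (a(Suc (length cs) := \<alpha>)) (Suc (length cs)) x + hd cs)"
    unfolding inv_chain_Suc_fun_upd[OF inv] chain using \<open>\<beta> \<noteq> 0\<close> by (simp add: fun_eq_iff)
  then show ?thesis using \<open>\<beta> \<noteq> 0\<close> unfolding affine_inv_chain_def by blast
qed

lemma permutation_orbit_eq_iff:
  assumes "permutation f"
  shows "orbit f y = orbit f x \<longleftrightarrow> y \<in> orbit f x"
  using orbit_cyclic_eq3[OF cyclic_on_orbit'[OF assms]] permutation_self_in_orbit[OF assms] by metis

lemma set_support_eq_orbit:
  assumes "permutation f"
  shows "set (support f x) = orbit f x"
  using support_set[OF assms] orbit_altdef_permutation[OF assms] by auto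

lemma cycle_of_list_support:
  assumes "permutation f"
  shows "cycle_of_list (support f x) = perm_restrict f (orbit f x)"
proof
  fix y
  show "cycle_of_list (support f x) y = perm_restrict f (orbit f x) y"
  proof (cases "y \<in> orbit f x")
    case True
    then show ?thesis
      using cycle_restrict[OF assms, of y x] set_support_eq_orbit[OF assms, of x]
      by (simp add: perm_restrict_simps)
  next
    case False
    then show ?thesis
      using id_outside_supp[of y "support f x"] set_support_eq_orbit[OF assms, of x]
      by (simp add: perm_restrict_simps)
  qed
qed

lemma affine_inv_chain_perm_restrict_orbit:
  fixes f :: "'a::field \<Rightarrow> 'a"
  assumes inv: "\<And>x::'a. x ^ e = inverse x" and "permutation f"
  shows "affine_inv_chain e (Suc (card (orbit f x))) (perm_restrict f (orbit f x))"
proof -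
  have "distinct (support f x)" by (rule cycle_of_permutation[OF assms(2)])
  moreover have "support f x \<noteq> []" using least_power_of_permutation(2)[OF assms(2), of x] by simp
  moreover have "card (orbit f x) = length (support f x)"
    using distinct_card[OF \<open>distinct (support f x)\<close>] set_support_eq_orbit[OF assms(2)] by simp
  ultimately show ?thesis
    using affine_inv_chain_cycle_of_list[OF inv] cycle_of_list_support[OF assms(2)] by metis
qed

lemma perm_restrict_Compl_orbit_comp:
  assumes "permutation f"
  shows "perm_restrict f (- orbit f x) \<circ> perm_restrict f (orbit f x) = f"
proof -
  have "perm_restrict f (- orbit f x) \<circ> perm_restrict f (orbit f x) = perm_restrict f (- orbit f x \<union> orbit f x)"
    by (rule perm_restrict_comp) (auto intro: cyclic_on_orbit'[OF assms])
  then show ?thesis by (simp add: perm_restrict_def fun_eq_iff)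
qed

lemma permutation_perm_restrict_Compl_orbit:
  assumes "permutation f"
  shows "permutation (perm_restrict f (- orbit f x))"
proof -
  let ?h = "perm_restrict f (orbit f x)"
  have "permutation ?h" using permutation_of_cycle cycle_of_list_support[OF assms] by metis
  then have "perm_restrict f (- orbit f x) = f \<circ> inv ?h"
    using perm_restrict_Compl_orbit_comp[OF assms, of x]
    by (metis comp_assoc comp_id permutation_bijective bij_is_surj surj_iff)
  then show ?thesis
    using permutation_compose[OF assms permutation_inverse[OF \<open>permutation ?h\<close>]] by simp
qed

lemma nontriv_cycles_perm_restrict_Compl_orbit:
  assumes "permutation f"
  shows "nontriv_cycles (perm_restrict f (- orbit f x)) = nontriv_cycles f - {orbit f x}"
proof -
  let ?C = "orbit f x" and ?g = "perm_restrict f (- orbit f x)"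
  have orbit_g: "orbit ?g y = orbit f y" if "y \<notin> ?C" for y
  proof (rule orbit_cong)
    show "y \<in> orbit f y" by (rule permutation_self_in_orbit[OF assms])
    fix s assume "s \<in> orbit f y"
    then have "s \<notin> ?C"
      using that permutation_orbit_eq_iff[OF assms] permutation_self_in_orbit[OF assms] by metis
    then show "?g s = f s" by (simp add: perm_restrict_simps)
  qed
  have "nontriv_cycles ?g = {orbit f y | y. f y \<noteq> y \<and> y \<notin> ?C}"
    unfolding nontriv_cycles_def using orbit_g by (auto simp: perm_restrict_def)
  also have "\<dots> = nontriv_cycles f - {?C}"
    unfolding nontriv_cycles_def using permutation_orbit_eq_iff[OF assms] by auto
  finally show ?thesis .
qed

lemma finite_nontriv_cycles:
  assumes "permutation f"
  shows "finite (nontriv_cycles f)"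
proof -
  have "nontriv_cycles f = orbit f ` {x. f x \<noteq> x}" unfolding nontriv_cycles_def by auto
  then show ?thesis using assms by (simp add: permutation)
qed

definition cycle_weight :: "('a \<Rightarrow> 'a) \<Rightarrow> nat" where
  "cycle_weight f = (\<Sum>c\<in>nontriv_cycles f. card c) + card (nontriv_cycles f)"

lemma affine_inv_chain_permutation:
  fixes f :: "'a::field \<Rightarrow> 'a"
  assumes inv: "\<And>x::'a. x ^ e = inverse x" and "permutation f"
  shows "affine_inv_chain e (cycle_weight f) f"
  using assms(2)
proof (induction "card (nontriv_cycles f)" arbitrary: f rule: less_induct)
  case less
  show ?case
  proof (cases "f = id")
    case True
    then have "nontriv_cycles f = {}" by (simp add: nontriv_cycles_def)
    then show ?thesis using affine_inv_chain_id True by (simp add: cycle_weight_def)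
  next
    case False
    then obtain x where "f x \<noteq> x" by (auto simp: fun_eq_iff)
    define C where "C = orbit f x"
    define g where "g = perm_restrict f (- C)"
    have C: "C \<in> nontriv_cycles f" using \<open>f x \<noteq> x\<close> unfolding C_def nontriv_cycles_def by blast
    have fin: "finite (nontriv_cycles f)" by (rule finite_nontriv_cycles[OF less.prems])
    have g_cycles: "nontriv_cycles g = nontriv_cycles f - {C}"
      unfolding g_def C_def by (rule nontriv_cycles_perm_restrict_Compl_orbit[OF less.prems])
    have "affine_inv_chain e (cycle_weight g) g"
    proof (rule less.hyps)
      show "card (nontriv_cycles g) < card (nontriv_cycles f)"
        unfolding g_cycles using fin C by (rule card_Diff1_less)
      show "permutation g"
        unfolding g_def C_def by (rule permutation_perm_restrict_Compl_orbit[OF less.prems])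
    qed
    moreover have "affine_inv_chain e (Suc (card C)) (perm_restrict f C)"
      unfolding C_def by (rule affine_inv_chain_perm_restrict_orbit[OF inv less.prems])
    ultimately have "affine_inv_chain e (cycle_weight g + Suc (card C)) (g \<circ> perm_restrict f C)"
      by (rule affine_inv_chain_comp[OF inv])
    moreover have "g \<circ> perm_restrict f C = f"
      unfolding g_def C_def by (rule perm_restrict_Compl_orbit_comp[OF less.prems])
    moreover have "cycle_weight f = cycle_weight g + Suc (card C)"
      unfolding cycle_weight_def g_cycles using sum.remove[OF fin C, of card] card.remove[OF fin C] by simp
    ultimately show ?thesis by simp
  qed
qed

theorem mainTheorem10:
  fixes f :: "'a::{finite,field} \<Rightarrow> 'a"
  assumes "card (UNIV::'a set) > 2"
    and "bij f"
    and "f \<noteq> id"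
    and "k = (\<Sum>c\<in>nontriv_cycles f. card c) + card (nontriv_cycles f)"
  shows "\<exists>(a::nat \<Rightarrow> 'a) (\<mu>::'a poly). degree \<mu> = 1 \<and>
           f = poly \<mu> \<circ> inv_chain (card (UNIV::'a set) - 2) a k"
proof -
  have "permutation f" using assms(2) by (simp add: permutation)
  then obtain a \<alpha> \<beta> where "\<alpha> \<noteq> 0" and "f = (\<lambda>x. \<alpha> * inv_chain (card (UNIV::'a set) - 2) a k x + \<beta>)"
    using affine_inv_chain_permutation[OF power_card_minus_two_eq_inverse[OF assms(1)]] assms(4)
    unfolding affine_inv_chain_def cycle_weight_def by blast
  then show ?thesis
    by (intro exI[of _ a] exI[of _ "[:\<beta>, \<alpha>:]"]) (auto simp: fun_eq_iff algebra_simps)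
qed

end
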